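(* Let $n\in\mathbb{N}$ and $m\geq 3$. Then \[ \sigma'_m(n) =\frac{1}{(n-1)!} \sum_{k=1}^{n} (-1)^{k-1} (k-1)!\cdot B_{n,k} \big(1!\cdot p'_{m}(1),\ 2!\cdot p'_m(2),\ \dots,\ (n-k+1)!\cdot p'_m(n-k+1)\big). \]
   Context: The partial exponential Bell polynomials are $B_{n,k}(x_1,\dots,x_{n-k+1})=\sum \frac{n!}{j_1!\cdots j_{n-k+1}!}\prod_{i=1}^{n-k+1}\big(\frac{x_i}{i!}\big)^{j_i}$, the sum over all tuples of nonnegative integers $(j_1,\dots,j_{n-k+1})$ with $\sum_i j_i=k$ and $\sum_i i\,j_i=n$. For $m\ge3$ and $n\in\mathbb{N}$, $\sigma'_m(n)$ is the sum of the positive divisors $d$ of $n$ with $d\equiv 0$, $1$ or $m-1 \pmod m$. $p'_m(n)$ is the number of partitions of $n$ in which every part is congruent to $0$, $1$ or $m-1$ modulo $m$. *)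

theory Defs
  imports Complex_Main "HOL-Library.Multiset"
begin

(* The sum ranges over tuples (j_1,...,j_{n-k+1}) of naturals, represented as
   functions j :: nat => nat which vanish outside {1..n-k+1}. *)
definition bell_tuples :: "nat \<Rightarrow> nat \<Rightarrow> (nat \<Rightarrow> nat) set" where
  "bell_tuples n k = {j. (\<forall>i. i \<notin> {1..n-k+1} \<longrightarrow> j i = 0) \<and>
                         (\<Sum>i=1..n-k+1. j i) = k \<and> (\<Sum>i=1..n-k+1. i * j i) = n}"

definition partial_bell :: "nat \<Rightarrow> nat \<Rightarrow> (nat \<Rightarrow> real) \<Rightarrow> real" where
  "partial_bell n k x =
     (\<Sum>j\<in>bell_tuples n k.
        fact n / (\<Prod>i=1..n-k+1. fact (j i)) * (\<Prod>i=1..n-k+1. (x i / fact i) ^ j i))"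

definition sigma' :: "nat \<Rightarrow> nat \<Rightarrow> nat" where
  "sigma' m n = (\<Sum>d\<in>{d. d dvd n \<and> 0 < d \<and> (d mod m = 0 \<or> d mod m = 1 \<or> d mod m = m - 1)}. d)"

definition nat_partitions :: "nat \<Rightarrow> nat multiset set" where
  "nat_partitions n = {P. (\<forall>x\<in>#P. 0 < x) \<and> sum_mset P = n}"

definition p' :: "nat \<Rightarrow> nat \<Rightarrow> nat" where
  "p' m n = card {P \<in> nat_partitions n.
                   \<forall>x\<in>#P. x mod m = 0 \<or> x mod m = 1 \<or> x mod m = m - 1}"

end

theory Submission
  imports Defs "HOL-Computational_Algebra.Formal_Power_Series"
begin

(*
  Let A = \<Sum>n. p'_m(n) x^n and S = \<Sum>n. sigma'_m(n) x^n. Counting every part s of every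
  partition of n together with each j \<le> (multiplicity of s), and removing j copies of s,
  gives Euler's recurrence n p'_m(n) = \<Sum>k=1..n. sigma'_m(k) p'_m(n - k), i.e. x A' = S A.
  Since A(0) = 1, this says S = x (log A)' with log A = \<Sum>k\<ge>1. (-1)^(k-1) G^k / k for
  G = A - 1, so sigma'_m(n) = n [x^n] log A. By the multinomial theorem
  [x^n] G^k = k!/n! B_{n,k}(1! g_1, 2! g_2, ...), which turns n [x^n] log A into the
  alternating sum of Bell polynomials.
*)

unbundle fps_syntax

section \<open>Partitions with restricted parts\<close>

definition restricted_partitions :: "(nat \<Rightarrow> bool) \<Rightarrow> nat \<Rightarrow> nat multiset set" where
  "restricted_partitions Q n = {P. (\<forall>x\<in>#P. 0 < x \<and> Q x) \<and> sum_mset P = n}"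

text \<open>Bounding the divisors by \<open>n\<close> makes the value at \<open>0\<close> an honest empty sum.\<close>

definition restricted_divisor_sum :: "(nat \<Rightarrow> bool) \<Rightarrow> nat \<Rightarrow> nat" where
  "restricted_divisor_sum Q n = (\<Sum>d\<in>{d\<in>{1..n}. d dvd n \<and> Q d}. d)"

lemma sum_mset_eq_sum_mult_count:
  fixes P :: "'a::comm_semiring_1 multiset"
  assumes "finite A" and "set_mset P \<subseteq> A"
  shows "sum_mset P = (\<Sum>s\<in>A. of_nat (count P s) * s)"
  using assms(2)
proof (induction P)
  case (add x P)
  then have "(\<Sum>s\<in>A. of_nat (count (add_mset x P) s) * s) =
      (\<Sum>s\<in>A. of_nat (count P s) * s) + (\<Sum>s\<in>A. if s = x then s else 0)"
    unfolding sum.distrib[symmetric] by (intro sum.cong) (auto simp: algebra_simps)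
  with add show ?case
    using assms(1) by (simp add: sum.delta' add.commute)
qed simp

lemma member_le_sum_mset:
  fixes P :: "nat multiset"
  assumes "x \<in># P"
  shows "x \<le> sum_mset P"
  using multi_member_split[OF assms] by auto

lemma size_le_sum_mset:
  fixes P :: "nat multiset"
  assumes "\<forall>x\<in>#P. 0 < x"
  shows "size P \<le> sum_mset P"
  using assms by (induction P) auto

lemma finite_restricted_partitions: "finite (restricted_partitions Q n)"
proof (rule finite_subset)
  show "restricted_partitions Q n \<subseteq> (\<Union>s\<le>n. multisets_of_size {1..n} s)"
    using member_le_sum_mset size_le_sum_mset
    by (fastforce simp: restricted_partitions_def multisets_of_size_def Suc_le_eq)
qed auto

lemma count_mult_le_sum_mset: "count P s * s \<le> sum_mset (P :: nat multiset)"
proof -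
  have "count P s * s \<le> (\<Sum>x\<in>insert s (set_mset P). count P x * x)"
    by (rule member_le_sum) auto
  also have "\<dots> = sum_mset P"
    using sum_mset_eq_sum_mult_count[of "insert s (set_mset P)" P] by (simp add: subset_insertI)
  finally show ?thesis .
qed

lemma bij_betw_restricted_partitions_count_ge:
  assumes "0 < s" and "Q s" and "s * j \<le> n"
  shows "bij_betw (\<lambda>P. P - replicate_mset j s)
           {P \<in> restricted_partitions Q n. j \<le> count P s} (restricted_partitions Q (n - s * j))"
proof (rule bij_betw_byWitness[where f' = "\<lambda>P. P + replicate_mset j s"])
  show "\<forall>P\<in>{P \<in> restricted_partitions Q n. j \<le> count P s}.
      P - replicate_mset j s + replicate_mset j s = P"
    by (auto simp: subseteq_mset_def)
  show "(\<lambda>P. P - replicate_mset j s) ` {P \<in> restricted_partitions Q n. j \<le> count P s}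
      \<subseteq> restricted_partitions Q (n - s * j)"
    by (auto simp: restricted_partitions_def sum_mset_diff subseteq_mset_def mult.commute
        dest: in_diffD)
  show "(\<lambda>P. P + replicate_mset j s) ` restricted_partitions Q (n - s * j)
      \<subseteq> {P \<in> restricted_partitions Q n. j \<le> count P s}"
    using assms by (auto simp: restricted_partitions_def split: if_splits)
qed simp

lemma card_restricted_partitions_count_ge:
  assumes "0 < s" and "0 < j"
  shows "card {P \<in> restricted_partitions Q n. j \<le> count P s} =
    (if Q s \<and> s * j \<le> n then card (restricted_partitions Q (n - s * j)) else 0)"
proof (cases "Q s \<and> s * j \<le> n")
  case True
  then show ?thesis
    using bij_betw_same_card[OF bij_betw_restricted_partitions_count_ge] assms by simp
next
  case False
  have no_partition: "{P \<in> restricted_partitions Q n. j \<le> count P s} = {}"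
  proof safe
    fix P assume P: "P \<in> restricted_partitions Q n" and "j \<le> count P s"
    then have "s \<in># P"
      using assms by (simp flip: count_greater_zero_iff)
    have "j * s \<le> count P s * s"
      using \<open>j \<le> count P s\<close> by simp
    also have "\<dots> \<le> n"
      using P count_mult_le_sum_mset[of P s] by (simp add: restricted_partitions_def)
    finally have "j * s \<le> n" .
    with P False \<open>s \<in># P\<close> show "P \<in> {}"
      by (auto simp: restricted_partitions_def mult.commute)
  qed
  show ?thesis
    by (simp only: no_partition if_not_P[OF False] card.empty)
qed

lemma sum_multiples_reindex:
  fixes d n :: nat
  assumes "0 < d"
  shows "(\<Sum>k\<in>{k\<in>{1..n}. d dvd k}. g k) = (\<Sum>j=1..n div d. g (d * j))"
proof (rule sum.reindex_bij_witness[where i = "\<lambda>j. d * j" and j = "\<lambda>k. k div d"])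
  fix k assume "k \<in> {k\<in>{1..n}. d dvd k}"
  then show "d * (k div d) = k" and "k div d \<in> {1..n div d}"
    using assms by (auto simp: div_le_mono dvd_div_eq_0_iff leI)
next
  fix j assume "j \<in> {1..n div d}"
  then show "d * j div d = j" and "d * j \<in> {k\<in>{1..n}. d dvd k}"
    using assms by (auto simp: less_eq_div_iff_mult_less_eq mult.commute)
qed simp

lemma sum_divisors_swap:
  fixes g :: "nat \<Rightarrow> nat \<Rightarrow> 'a::comm_monoid_add"
  shows "(\<Sum>k=1..n. \<Sum>d\<in>{d\<in>{1..k}. d dvd k}. g d k) = (\<Sum>d=1..n. \<Sum>j=1..n div d. g d (d * j))"
proof -
  have "{d\<in>{1..k}. d dvd k} = {d\<in>{1..n}. d dvd k}" if "k \<in> {1..n}" for k :: nat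
    using that dvd_imp_le[of _ k] by fastforce
  then have "(\<Sum>k=1..n. \<Sum>d\<in>{d\<in>{1..k}. d dvd k}. g d k) = (\<Sum>k=1..n. \<Sum>d\<in>{d\<in>{1..n}. d dvd k}. g d k)"
    by (intro sum.cong) simp_all
  also have "\<dots> = (\<Sum>d=1..n. \<Sum>k\<in>{k\<in>{1..n}. d dvd k}. g d k)"
    by (rule sum.swap_restrict) auto
  also have "\<dots> = (\<Sum>d=1..n. \<Sum>j=1..n div d. g d (d * j))"
    by (intro sum.cong refl sum_multiples_reindex) simp
  finally show ?thesis .
qed

lemma sum_mset_eq_sum_count_ge:
  assumes "P \<in> restricted_partitions Q n"
  shows "sum_mset P = (\<Sum>s=1..n. \<Sum>j=1..n div s. if j \<le> count P s then s else 0)"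
proof -
  have "set_mset P \<subseteq> {1..n}"
    using assms member_le_sum_mset by (force simp: restricted_partitions_def Suc_le_eq)
  then have "sum_mset P = (\<Sum>s=1..n. count P s * s)"
    using sum_mset_eq_sum_mult_count[of "{1..n}" P] by simp
  also have "\<dots> = (\<Sum>s=1..n. \<Sum>j=1..n div s. if j \<le> count P s then s else 0)"
  proof (intro sum.cong refl)
    fix s :: nat assume "s \<in> {1..n}"
    then have "count P s \<le> n div s"
      using assms count_mult_le_sum_mset[of P s]
      by (simp add: restricted_partitions_def less_eq_div_iff_mult_less_eq)
    then have "{j \<in> {1..n div s}. j \<le> count P s} = {1..count P s}"
      by auto
    then show "count P s * s = (\<Sum>j=1..n div s. if j \<le> count P s then s else 0)"
      by (simp flip: sum.inter_filter)
  qed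
  finally show ?thesis .
qed

lemma restricted_partitions_recurrence:
  "n * card (restricted_partitions Q n) =
    (\<Sum>k=1..n. restricted_divisor_sum Q k * card (restricted_partitions Q (n - k)))"
proof -
  let ?p = "\<lambda>n. card (restricted_partitions Q n)"
  have "n * ?p n = (\<Sum>P\<in>restricted_partitions Q n. sum_mset P)"
    by (simp add: restricted_partitions_def)
  also have "\<dots> = (\<Sum>P\<in>restricted_partitions Q n. \<Sum>s=1..n. \<Sum>j=1..n div s.
      if j \<le> count P s then s else 0)"
    by (intro sum.cong refl sum_mset_eq_sum_count_ge)
  also have "\<dots> = (\<Sum>s=1..n. \<Sum>j=1..n div s. \<Sum>P\<in>restricted_partitions Q n.
      if j \<le> count P s then s else 0)"
    by (subst sum.swap) (intro sum.cong refl sum.swap)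
  also have "\<dots> = (\<Sum>s=1..n. \<Sum>j=1..n div s. s * card {P \<in> restricted_partitions Q n. j \<le> count P s})"
    by (simp add: finite_restricted_partitions mult.commute flip: sum.inter_filter)
  also have "\<dots> = (\<Sum>s=1..n. \<Sum>j=1..n div s. if Q s then s * ?p (n - s * j) else 0)"
    by (intro sum.cong refl)
      (auto simp: card_restricted_partitions_count_ge less_eq_div_iff_mult_less_eq mult.commute)
  also have "\<dots> = (\<Sum>k=1..n. \<Sum>d\<in>{d\<in>{1..k}. d dvd k}. if Q d then d * ?p (n - k) else 0)"
    by (rule sum_divisors_swap[symmetric])
  also have "\<dots> = (\<Sum>k=1..n. restricted_divisor_sum Q k * ?p (n - k))"
  proof (intro sum.cong refl)
    fix k
    have "{d\<in>{1..k}. d dvd k \<and> Q d} = {d\<in>{d\<in>{1..k}. d dvd k}. Q d}"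
      by auto
    then show "(\<Sum>d\<in>{d\<in>{1..k}. d dvd k}. if Q d then d * ?p (n - k) else 0) =
        restricted_divisor_sum Q k * ?p (n - k)"
      by (simp add: restricted_divisor_sum_def sum_distrib_right flip: sum.inter_filter)
  qed
  finally show ?thesis .
qed

lemma restricted_partitions_0: "restricted_partitions Q 0 = {{#}}"
  by (auto simp: restricted_partitions_def) (metis gr_implies_not0 multiset_nonemptyE)

lemma fps_X_mult_deriv_nth: "(fps_X * fps_deriv f) $ n = of_nat n * f $ n"
  by (cases n) (simp_all add: fps_X_mult_nth)

definition restricted_partition_fps :: "(nat \<Rightarrow> bool) \<Rightarrow> 'a::comm_semiring_1 fps" where
  "restricted_partition_fps Q = Abs_fps (\<lambda>n. of_nat (card (restricted_partitions Q n)))"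

definition restricted_divisor_sum_fps :: "(nat \<Rightarrow> bool) \<Rightarrow> 'a::comm_semiring_1 fps" where
  "restricted_divisor_sum_fps Q = Abs_fps (\<lambda>n. of_nat (restricted_divisor_sum Q n))"

lemma restricted_partition_fps_nth_0 [simp]: "restricted_partition_fps Q $ 0 = 1"
  by (simp add: restricted_partition_fps_def restricted_partitions_0)

lemma fps_X_deriv_restricted_partition_fps:
  "fps_X * fps_deriv (restricted_partition_fps Q) =
    restricted_divisor_sum_fps Q * (restricted_partition_fps Q :: 'a::comm_semiring_1 fps)"
proof (rule fps_ext)
  fix n
  let ?p = "\<lambda>n. card (restricted_partitions Q n)"
  have "(fps_X * fps_deriv (restricted_partition_fps Q) :: 'a fps) $ n = of_nat (n * ?p n)"
    by (simp add: fps_X_mult_deriv_nth restricted_partition_fps_def)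
  also have "\<dots> = of_nat (\<Sum>k=1..n. restricted_divisor_sum Q k * ?p (n - k))"
    by (simp only: restricted_partitions_recurrence)
  also have "\<dots> = (\<Sum>k=0..n. of_nat (restricted_divisor_sum Q k) * of_nat (?p (n - k)))"
    by (simp add: sum.atLeast_Suc_atMost restricted_divisor_sum_def)
  also have "\<dots> = (restricted_divisor_sum_fps Q * restricted_partition_fps Q :: 'a fps) $ n"
    by (simp add: fps_mult_nth restricted_divisor_sum_fps_def restricted_partition_fps_def)
  finally show "(fps_X * fps_deriv (restricted_partition_fps Q) :: 'a fps) $ n =
      (restricted_divisor_sum_fps Q * restricted_partition_fps Q) $ n" .
qed

section \<open>The logarithm of a power series with constant term 1\<close>

lemma fps_ln_compose_nth:
  fixes G :: "'a::field_char_0 fps"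
  shows "(fps_ln 1 oo G) $ n = (\<Sum>k=1..n. (-1) ^ (k - 1) / of_nat k * (G ^ k) $ n)"
  by (simp add: fps_compose_nth fps_ln_nth sum.atLeast_Suc_atMost)

lemma fps_deriv_ln_compose:
  fixes A :: "'a::field_char_0 fps"
  assumes "A $ 0 = 1"
  shows "A * fps_deriv (fps_ln 1 oo (A - 1)) = fps_deriv A"
proof -
  have G0: "(A - 1) $ 0 = 0"
    using assms by simp
  have "(1 + fps_X) oo (A - 1) = A"
    using G0 by (simp add: fps_compose_add_distrib)
  then have "inverse (1 + fps_X) oo (A - 1) = inverse A"
    using fps_inverse_compose[OF G0, of "1 + fps_X"] by simp
  then have "fps_deriv (fps_ln 1 oo (A - 1)) = inverse A * fps_deriv A"
    by (simp add: fps_compose_deriv[OF G0] fps_ln_deriv)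
  then show ?thesis
    using assms by (simp add: inverse_mult_eq_1' mult.assoc[symmetric])
qed

lemma log_derivative_eq_fps_ln_compose:
  fixes A S :: "'a::field_char_0 fps"
  assumes "A $ 0 = 1" and "fps_X * fps_deriv A = S * A"
  shows "S = fps_X * fps_deriv (fps_ln 1 oo (A - 1))"
proof -
  have "A * (fps_X * fps_deriv (fps_ln 1 oo (A - 1))) =
      fps_X * (A * fps_deriv (fps_ln 1 oo (A - 1)))"
    by (simp add: ac_simps)
  also have "\<dots> = A * S"
    using assms by (simp add: fps_deriv_ln_compose mult.commute)
  finally show ?thesis
    using assms(1) by (auto simp: fps_nonzeroI)
qed

section \<open>Partial Bell polynomials as coefficients of powers\<close>

text \<open>\<open>j i\<close> is the multiplicity of the part \<open>i\<close> in a partition of \<open>n\<close> into \<open>k\<close> parts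
  of size at most \<open>N\<close>.\<close>

definition part_multiplicities :: "nat \<Rightarrow> nat \<Rightarrow> nat \<Rightarrow> (nat \<Rightarrow> nat) set" where
  "part_multiplicities N n k = {j. (\<forall>i. i \<notin> {1..N} \<longrightarrow> j i = 0) \<and>
                                  (\<Sum>i=1..N. j i) = k \<and> (\<Sum>i=1..N. i * j i) = n}"

lemma part_multiplicities_0:
  "part_multiplicities 0 n k = (if n = 0 \<and> k = 0 then {\<lambda>_. 0} else {})"
  by (auto simp: part_multiplicities_def)

lemma part_multiplicities_Suc:
  "part_multiplicities (Suc N) n k = (\<lambda>(l, j). j(Suc N := l)) `
     (SIGMA l:{l. l \<le> k \<and> Suc N * l \<le> n}. part_multiplicities N (n - Suc N * l) (k - l))"
proof (intro equalityI subsetI)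
  fix j assume j: "j \<in> part_multiplicities (Suc N) n k"
  define l where "l = j (Suc N)"
  define j' where "j' = j(Suc N := 0)"
  have "(\<Sum>i=1..N. j' i) = (\<Sum>i=1..N. j i)" and "(\<Sum>i=1..N. i * j' i) = (\<Sum>i=1..N. i * j i)"
    by (auto simp: j'_def intro!: sum.cong)
  moreover have "(\<Sum>i=1..N. j i) + l = k" and "(\<Sum>i=1..N. i * j i) + Suc N * l = n"
    using j by (simp_all add: part_multiplicities_def l_def)
  ultimately have "l \<le> k" "Suc N * l \<le> n" "j' \<in> part_multiplicities N (n - Suc N * l) (k - l)"
    using j by (auto simp: part_multiplicities_def j'_def)
  moreover have "j = j'(Suc N := l)"
    by (auto simp: j'_def l_def)
  ultimately show "j \<in> (\<lambda>(l, j). j(Suc N := l)) `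
     (SIGMA l:{l. l \<le> k \<and> Suc N * l \<le> n}. part_multiplicities N (n - Suc N * l) (k - l))"
    by force
next
  fix j assume "j \<in> (\<lambda>(l, j). j(Suc N := l)) `
     (SIGMA l:{l. l \<le> k \<and> Suc N * l \<le> n}. part_multiplicities N (n - Suc N * l) (k - l))"
  then obtain l j' where l: "l \<le> k" "Suc N * l \<le> n"
    and j': "j' \<in> part_multiplicities N (n - Suc N * l) (k - l)" and j: "j = j'(Suc N := l)"
    by auto
  have "(\<Sum>i=1..N. j i) = (\<Sum>i=1..N. j' i)" and "(\<Sum>i=1..N. i * j i) = (\<Sum>i=1..N. i * j' i)"
    by (auto simp: j intro!: sum.cong)
  with j' l show "j \<in> part_multiplicities (Suc N) n k"
    by (auto simp: part_multiplicities_def j)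
qed

lemma inj_on_part_multiplicities_Suc:
  "inj_on (\<lambda>(l, j). j(Suc N := l))
     (SIGMA l:{l. l \<le> k \<and> Suc N * l \<le> n}. part_multiplicities N (n - Suc N * l) (k - l))"
proof (rule inj_onI, clarify)
  fix l j l' j'
  assume j: "j \<in> part_multiplicities N (n - Suc N * l) (k - l)"
    and j': "j' \<in> part_multiplicities N (n - Suc N * l') (k - l')"
    and eq: "j(Suc N := l) = j'(Suc N := l')"
  have "j i = j' i" for i
    using fun_cong[OF eq, of i] j j' by (cases "i = Suc N") (auto simp: part_multiplicities_def)
  with fun_cong[OF eq, of "Suc N"] show "l = l' \<and> j = j'"
    by auto
qed

lemma finite_part_multiplicities: "finite (part_multiplicities N n k)"
proof (induction N arbitrary: n k)
  case 0
  then show ?case by (simp add: part_multiplicities_0)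
next
  case (Suc N)
  then show ?case
    unfolding part_multiplicities_Suc by (intro finite_imageI finite_SigmaI) auto
qed

lemma sum_part_multiplicities_Suc:
  fixes x :: "nat \<Rightarrow> 'a::field_char_0"
  shows "(\<Sum>j\<in>part_multiplicities (Suc N) n k. \<Prod>i=1..Suc N. x i ^ j i / fact (j i)) =
    (\<Sum>l | l \<le> k \<and> Suc N * l \<le> n. x (Suc N) ^ l / fact l *
       (\<Sum>j\<in>part_multiplicities N (n - Suc N * l) (k - l). \<Prod>i=1..N. x i ^ j i / fact (j i)))"
proof -
  have "(\<Sum>j\<in>part_multiplicities (Suc N) n k. \<Prod>i=1..Suc N. x i ^ j i / fact (j i)) =
      (\<Sum>(l, j)\<in>(SIGMA l:{l. l \<le> k \<and> Suc N * l \<le> n}. part_multiplicities N (n - Suc N * l) (k - l)).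
         \<Prod>i=1..Suc N. x i ^ (j(Suc N := l)) i / fact ((j(Suc N := l)) i))"
    unfolding part_multiplicities_Suc
    by (subst sum.reindex[OF inj_on_part_multiplicities_Suc]) (simp add: case_prod_unfold)
  also have "\<dots> = (\<Sum>l | l \<le> k \<and> Suc N * l \<le> n. \<Sum>j\<in>part_multiplicities N (n - Suc N * l) (k - l).
         \<Prod>i=1..Suc N. x i ^ (j(Suc N := l)) i / fact ((j(Suc N := l)) i))"
    by (rule sum.Sigma[symmetric]) (auto simp: finite_part_multiplicities)
  also have "\<dots> = (\<Sum>l | l \<le> k \<and> Suc N * l \<le> n. x (Suc N) ^ l / fact l *
       (\<Sum>j\<in>part_multiplicities N (n - Suc N * l) (k - l). \<Prod>i=1..N. x i ^ j i / fact (j i)))"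
    unfolding sum_distrib_left
  proof (intro sum.cong refl)
    fix l j
    have "(\<Prod>i=1..N. x i ^ (j(Suc N := l)) i / fact ((j(Suc N := l)) i)) =
        (\<Prod>i=1..N. x i ^ j i / fact (j i))"
      by (intro prod.cong) auto
    then show "(\<Prod>i=1..Suc N. x i ^ (j(Suc N := l)) i / fact ((j(Suc N := l)) i)) =
        x (Suc N) ^ l / fact l * (\<Prod>i=1..N. x i ^ j i / fact (j i))"
      by (simp add: prod.cl_ivl_Suc)
  qed
  finally show ?thesis .
qed

lemma fps_cutoff_Suc_Suc:
  "fps_cutoff (Suc (Suc N)) G = fps_cutoff (Suc N) G + fps_const (G $ Suc N) * fps_X ^ Suc N"
  by (rule fps_ext) (auto simp: fps_X_power_iff)

lemma fps_const_mult_X_power_mult_nth: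
  "(fps_const c * fps_X ^ m * f) $ n = (if n < m then 0 else c * f $ (n - m))"
  by (simp add: mult.assoc fps_X_power_mult_nth)

text \<open>The multinomial theorem for the polynomial \<open>g\<^sub>1 x + \<dots> + g\<^sub>N x\<^sup>N\<close>.\<close>

lemma nth_power_fps_cutoff:
  fixes G :: "'a::field_char_0 fps"
  assumes "G $ 0 = 0"
  shows "(fps_cutoff (Suc N) G ^ k) $ n =
    fact k * (\<Sum>j\<in>part_multiplicities N n k. \<Prod>i=1..N. (G $ i) ^ j i / fact (j i))"
proof (induction N arbitrary: n k)
  case 0
  have "fps_cutoff (Suc 0) G = 0"
    using assms by (simp add: fps_eq_iff)
  then show ?case
    by (cases k) (auto simp: part_multiplicities_0)
next
  case (Suc N)
  let ?C = "fps_cutoff (Suc N) G" and ?c = "G $ Suc N"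
  have "fps_cutoff (Suc (Suc N)) G ^ k =
      (\<Sum>l\<le>k. fps_const (of_nat (k choose l) * ?c ^ l) * fps_X ^ (Suc N * l) * ?C ^ (k - l))"
    unfolding fps_cutoff_Suc_Suc add.commute[of ?C] binomial_ring
  proof (intro sum.cong refl)
    fix l
    have "(fps_const ?c * fps_X ^ Suc N) ^ l = fps_const (?c ^ l) * fps_X ^ (Suc N * l)"
      by (simp only: power_mult_distrib fps_const_power power_mult)
    then show "of_nat (k choose l) * (fps_const ?c * fps_X ^ Suc N) ^ l * ?C ^ (k - l) =
        fps_const (of_nat (k choose l) * ?c ^ l) * fps_X ^ (Suc N * l) * ?C ^ (k - l)"
      by (simp only: fps_of_nat[symmetric] fps_const_mult[symmetric] mult.assoc)
  qed
  then have "(fps_cutoff (Suc (Suc N)) G ^ k) $ n = (\<Sum>l\<le>k. if n < Suc N * l then 0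
      else of_nat (k choose l) * ?c ^ l * (?C ^ (k - l)) $ (n - Suc N * l))"
    by (simp only: fps_sum_nth fps_const_mult_X_power_mult_nth)
  also have "\<dots> = (\<Sum>l\<le>k. if n < Suc N * l then 0 else fact k * (?c ^ l / fact l *
      (\<Sum>j\<in>part_multiplicities N (n - Suc N * l) (k - l). \<Prod>i=1..N. (G $ i) ^ j i / fact (j i))))"
  proof (intro sum.cong refl)
    fix l assume "l \<in> {..k}"
    then have "of_nat (k choose l) * fact (k - l) = (fact k / fact l :: 'a)"
      by (simp add: binomial_fact field_simps)
    then show "(if n < Suc N * l then 0
        else of_nat (k choose l) * ?c ^ l * (?C ^ (k - l)) $ (n - Suc N * l)) =
      (if n < Suc N * l then 0 else fact k * (?c ^ l / fact l *
      (\<Sum>j\<in>part_multiplicities N (n - Suc N * l) (k - l). \<Prod>i=1..N. (G $ i) ^ j i / fact (j i))))"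
      by (simp add: Suc.IH field_simps)
  qed
  also have "\<dots> = fact k * (\<Sum>l | l \<le> k \<and> Suc N * l \<le> n. ?c ^ l / fact l *
      (\<Sum>j\<in>part_multiplicities N (n - Suc N * l) (k - l). \<Prod>i=1..N. (G $ i) ^ j i / fact (j i)))"
  proof -
    have eq: "{l. l \<le> k \<and> Suc N * l \<le> n} = {l\<in>{..k}. Suc N * l \<le> n}"
      by auto
    show ?thesis
      unfolding eq sum_distrib_left sum.inter_filter[OF finite_atMost]
      by (intro sum.cong refl) (simp add: not_less sum_distrib_left)
  qed
  finally show ?case
    by (simp only: sum_part_multiplicities_Suc)
qed

lemma nth_power_fps_cutoff_eq:
  fixes G :: "'a::comm_ring_1 fps"
  assumes "G $ 0 = 0" and "n < N + k"
  shows "(fps_cutoff (Suc N) G ^ k) $ n = (G ^ k) $ n"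
  using assms(2)
proof (induction k arbitrary: n)
  case (Suc k)
  have "fps_cutoff (Suc N) G $ i * (fps_cutoff (Suc N) G ^ k) $ (n - i) = G $ i * (G ^ k) $ (n - i)"
    if "i \<in> {0..n}" for i
  proof (cases "i = 0 \<or> N < i")
    case True
    then have "i = 0 \<or> n - i < k"
      using Suc.prems that by auto
    then show ?thesis
      using True assms(1) startsby_zero_power_prefix[OF assms(1)] by auto
  next
    case False
    then show ?thesis
      using Suc by auto
  qed
  then show ?case
    by (simp add: fps_mult_nth)
qed simp

lemma partial_bell_cong:
  assumes "\<And>i. 0 < i \<Longrightarrow> x i = y i"
  shows "partial_bell n k x = partial_bell n k y"
  unfolding partial_bell_def using assms by (intro sum.cong prod.cong refl) auto

lemma partial_bell_eq_nth_power:
  fixes G :: "real fps"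
  assumes "G $ 0 = 0"
  shows "partial_bell n k (\<lambda>i. fact i * G $ i) = fact n / fact k * (G ^ k) $ n"
proof -
  have "partial_bell n k (\<lambda>i. fact i * G $ i) =
      fact n * (\<Sum>j\<in>part_multiplicities (n - k + 1) n k. \<Prod>i=1..n-k+1. (G $ i) ^ j i / fact (j i))"
    unfolding partial_bell_def bell_tuples_def part_multiplicities_def sum_distrib_left
    by (intro sum.cong refl) (simp add: prod_dividef)
  also have "\<dots> = fact n / fact k * (fps_cutoff (Suc (n - k + 1)) G ^ k) $ n"
    by (simp add: nth_power_fps_cutoff[OF assms])
  also have "(fps_cutoff (Suc (n - k + 1)) G ^ k) $ n = (G ^ k) $ n"
    by (rule nth_power_fps_cutoff_eq[OF assms]) simp
  finally show ?thesis .
qed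

lemma sum_partial_bell_eq_nth_fps_ln_compose:
  fixes G :: "real fps"
  assumes "G $ 0 = 0"
  shows "(\<Sum>k=1..n. (-1) ^ (k - 1) * fact (k - 1) * partial_bell n k (\<lambda>i. fact i * G $ i)) =
    fact n * (fps_ln 1 oo G) $ n"
  unfolding fps_ln_compose_nth sum_distrib_left
proof (intro sum.cong refl)
  fix k :: nat assume "k \<in> {1..n}"
  then have "fact k = of_nat k * (fact (k - 1) :: real)"
    by (simp add: fact_reduce)
  then show "(-1) ^ (k - 1) * fact (k - 1) * partial_bell n k (\<lambda>i. fact i * G $ i) =
      fact n * ((-1) ^ (k - 1) / of_nat k * (G ^ k) $ n)"
    using \<open>k \<in> {1..n}\<close> by (simp add: partial_bell_eq_nth_power[OF assms] field_simps)
qed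

lemma p'_eq_card_restricted_partitions:
  "p' m n = card (restricted_partitions (\<lambda>d. d mod m = 0 \<or> d mod m = 1 \<or> d mod m = m - 1) n)"
  unfolding p'_def nat_partitions_def restricted_partitions_def
  by (rule arg_cong[where f = card]) auto

lemma sigma'_eq_restricted_divisor_sum:
  assumes "0 < n"
  shows "sigma' m n = restricted_divisor_sum (\<lambda>d. d mod m = 0 \<or> d mod m = 1 \<or> d mod m = m - 1) n"
  unfolding sigma'_def restricted_divisor_sum_def
  using assms by (intro arg_cong[where f = "sum (\<lambda>d. d)"]) (auto dest: dvd_imp_le)

theorem corollary3p2:
  fixes n m :: nat
  assumes "n \<ge> 1" and "m \<ge> 3"
  shows "real (sigma' m n) =
    1 / fact (n - 1) *
    (\<Sum>k=1..n. (-1) ^ (k - 1) * fact (k - 1) *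
        partial_bell n k (\<lambda>i. fact i * real (p' m i)))"
proof -
  define Q where "Q = (\<lambda>d::nat. d mod m = 0 \<or> d mod m = 1 \<or> d mod m = m - 1)"
  define A :: "real fps" where "A = restricted_partition_fps Q"
  define L where "L = fps_ln 1 oo (A - 1)"
  have "restricted_divisor_sum_fps Q = fps_X * fps_deriv L"
    unfolding A_def L_def
    by (rule log_derivative_eq_fps_ln_compose) (simp_all add: fps_X_deriv_restricted_partition_fps)
  then have "real (sigma' m n) = of_nat n * L $ n"
    using assms(1)
    by (simp add: sigma'_eq_restricted_divisor_sum Q_def restricted_divisor_sum_fps_def
        fps_eq_iff fps_X_mult_deriv_nth)
  also have "\<dots> = 1 / fact (n - 1) * (fact n * L $ n)"
    using assms(1) by (simp add: fact_reduce)
  also have "fact n * L $ n =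
      (\<Sum>k=1..n. (-1) ^ (k - 1) * fact (k - 1) * partial_bell n k (\<lambda>i. fact i * (A - 1) $ i))"
    unfolding L_def by (rule sum_partial_bell_eq_nth_fps_ln_compose[symmetric]) (simp add: A_def)
  also have "\<dots> = (\<Sum>k=1..n. (-1) ^ (k - 1) * fact (k - 1) *
      partial_bell n k (\<lambda>i. fact i * real (p' m i)))"
    by (intro sum.cong refl arg_cong[where f = "\<lambda>b. _ * b"] partial_bell_cong)
      (simp add: A_def Q_def restricted_partition_fps_def p'_eq_card_restricted_partitions)
  finally show ?thesis .
qed

end
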